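(* Let $\tau$ be a nice vocabulary, $m,k\in\mathbb N$, and let $\mathfrak K$ be an $m$-ary $PW(k)$-class of $\tau$-structures. Then $\mathfrak K$ is $(m,0)$-constructible.
   Context: Vocabularies are finite and relational; a vocabulary is nice if every relation symbol has positive arity. $m$-ary $PW(k)$-class: for a nice $\tau$, a class $\mathfrak K$ of $\tau$-structures is an $m$-ary $PW(k)$-class if there are a vocabulary $\tau^+\supseteq\tau$ with $|\tau^+\setminus\tau|=k$ and every relation in $\tau^+\setminus\tau$ of arity at most $m$, and a finite set $\mathfrak P$ of $\tau^+$-structures, such that $\mathfrak K$ consists exactly of the $\tau$-reducts of structures in the closure of $\mathfrak P$ under: disjoint union; recoloring $\rho_{i\to j}$ (for unary auxiliary predicates, move all elements of $P_i$ to $P_j$); modifications $\delta_{R,B}$ (redefine a relation $R$ by a quantifier-free formula $B$ of $\tau^+$). A $k$-const structure is $(M,a_1,\dots,a_k)$ with $a_i\in|M|$. Addition operations $\mathfrak S_{\tau,k,k_1,k_2}$: an element $\mathbf s$ consists of sets $A_l\subseteq\{1,\dots,k_l\}$, injections $g_l:A_l\to\{1,\dots,k\}$ with disjoint images covering $\{1,\dots,k\}$, sets $B_l\subseteq\{1,\dots,k_l\}^2$, $B\subseteq\{1,\dots,k_1\}\times\{1,\dots,k_2\}$, and for each $R\in\tau$ of arity $n$ and $w_1,w_2\subseteq\{1,\dots,n\}$ a $\{\mathbb T,\mathbb F\}$-valued function $f_{R,w_1,w_2}$ on triples $(p,q_1,q_2)$ ($p$ a quantifier-free $n$-type in a vocabulary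 of $k_1+k_2$ constants and two unary predicates, $q_l$ a quantifier-free $\tau$-type in $(x_i)_{i\in w_l}$). For $k_l$-const $(M_l,\bar a^l)$ with $|M_1|\cap|M_2|\subseteq\{a^1_i\}\cap\{a^2_j\}$, $a^l_i=a^l_j\iff(i,j)\in B_l$, $a^1_i=a^2_j\iff(i,j)\in B$, the sum $M_1\circledast_{\mathbf s}M_2$ is the $k$-const structure with universe $(|M_1|\setminus\{a^1_i\})\cup(|M_2|\setminus\{a^2_i\})\cup\{a^l_i:i\in A_l\}$, constants $b_{g_l(i)}=a^l_i$, and $R(\bar x)$ given by $f_{R,w_1,w_2}(p,q_1,q_2)$ where $w_l=\{i:x_i\in|M_l|\}$, $p$ is the quantifier-free type of $\bar x$ over all constants $a^l_i$ and the predicates $|M_1|,|M_2|$, and $q_l$ the quantifier-free type of $(x_i)_{i\in w_l}$ in $M_l$. Empty structures $\mathrm{Null}_X$ are allowed. A class $\mathfrak K$ of $\tau$-structures is $(m^*,k^* )$-constructible if there are a finite relational $\tau^+\supseteq\tau$ with all relations in $\tau^+\setminus\tau$ of arity $\le m^*$, a finite set $\mathfrak P$ of $k$-const $\tau^+$-structures ($k\le k^*$), and a finite set $\mathfrak S$ of addition operations in $\mathfrak S_{\tau^+,k,k_1,k_2}$ with $k,k_1,k_2\le k^*$, such that $\mathfrak K$ is exactly the set of $\tau$-reducts of the closure of $\mathfrak P$ under $\mathfrak S$. *)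

theory Defs
  imports Main
begin

text \<open>A relation symbol is a pair (name, arity).
  Tuples are lists; all indices (variables, constants) are 0-based.\<close>

type_synonym sym = "nat \<times> nat"

definition ar :: "sym \<Rightarrow> nat" where
  "ar R = snd R"

definition vocab :: "sym set \<Rightarrow> bool" where
  "vocab \<sigma> \<longleftrightarrow> finite \<sigma>"

definition nice :: "sym set \<Rightarrow> bool" where
  "nice \<sigma> \<longleftrightarrow> vocab \<sigma> \<and> (\<forall>R\<in>\<sigma>. ar R > 0)"

record struc =
  univ :: "nat set"
  rel  :: "sym \<Rightarrow> nat list set"

definition is_struc :: "sym set \<Rightarrow> struc \<Rightarrow> bool" where
  "is_struc \<sigma> M \<longleftrightarrow> finite (univ M)
     \<and> (\<forall>R. rel M R \<subseteq> {xs. length xs = ar R \<and> set xs \<subseteq> univ M})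
     \<and> (\<forall>R. R \<notin> \<sigma> \<longrightarrow> rel M R = {})"

definition reduct :: "sym set \<Rightarrow> struc \<Rightarrow> struc" where
  "reduct \<sigma> M = \<lparr>univ = univ M, rel = (\<lambda>R. if R \<in> \<sigma> then rel M R else {})\<rparr>"

definition iso :: "(nat \<Rightarrow> nat) \<Rightarrow> struc \<Rightarrow> struc \<Rightarrow> bool" where
  "iso h M N \<longleftrightarrow> bij_betw h (univ M) (univ N) \<and> (\<forall>R. rel N R = map h ` rel M R)"

section \<open>Quantifier-free formulas (variables = tuple positions)\<close>

datatype qf = QTrue | QEq nat nat | QRel sym "nat list" | QNot qf | QAnd qf qf

fun qf_ok :: "sym set \<Rightarrow> nat \<Rightarrow> qf \<Rightarrow> bool" where
  "qf_ok \<sigma> n QTrue = True"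
| "qf_ok \<sigma> n (QEq i j) = (i < n \<and> j < n)"
| "qf_ok \<sigma> n (QRel R vs) = (R \<in> \<sigma> \<and> length vs = ar R \<and> (\<forall>v\<in>set vs. v < n))"
| "qf_ok \<sigma> n (QNot \<phi>) = qf_ok \<sigma> n \<phi>"
| "qf_ok \<sigma> n (QAnd \<phi> \<psi>) = (qf_ok \<sigma> n \<phi> \<and> qf_ok \<sigma> n \<psi>)"

fun qf_holds :: "struc \<Rightarrow> nat list \<Rightarrow> qf \<Rightarrow> bool" where
  "qf_holds M xs QTrue = True"
| "qf_holds M xs (QEq i j) = (xs ! i = xs ! j)"
| "qf_holds M xs (QRel R vs) = (map (\<lambda>v. xs ! v) vs \<in> rel M R)"
| "qf_holds M xs (QNot \<phi>) = (\<not> qf_holds M xs \<phi>)"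
| "qf_holds M xs (QAnd \<phi> \<psi>) = (qf_holds M xs \<phi> \<and> qf_holds M xs \<psi>)"

section \<open>PW(k)-classes\<close>

definition disj_union :: "struc \<Rightarrow> struc \<Rightarrow> struc" where
  "disj_union M N = \<lparr>univ = univ M \<union> univ N, rel = (\<lambda>R. rel M R \<union> rel N R)\<rparr>"

definition recolor :: "sym \<Rightarrow> sym \<Rightarrow> struc \<Rightarrow> struc" where
  "recolor P Q M = M\<lparr>rel := (rel M)(P := {}, Q := rel M P \<union> rel M Q)\<rparr>"

definition modify :: "sym \<Rightarrow> qf \<Rightarrow> struc \<Rightarrow> struc" where
  "modify R B M = M\<lparr>rel := (rel M)(R := {xs. length xs = ar R \<and> set xs \<subseteq> univ M \<and> qf_holds M xs B})\<rparr>"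

inductive_set pw_closure :: "sym set \<Rightarrow> sym set \<Rightarrow> struc set \<Rightarrow> struc set"
  for \<tau> \<tau>p :: "sym set" and P :: "struc set" where
  base: "M \<in> P \<Longrightarrow> M \<in> pw_closure \<tau> \<tau>p P"
| isom: "M \<in> pw_closure \<tau> \<tau>p P \<Longrightarrow> iso h M N \<Longrightarrow> N \<in> pw_closure \<tau> \<tau>p P"
| union: "M \<in> pw_closure \<tau> \<tau>p P \<Longrightarrow> N \<in> pw_closure \<tau> \<tau>p P \<Longrightarrow> univ M \<inter> univ N = {}
           \<Longrightarrow> disj_union M N \<in> pw_closure \<tau> \<tau>p P"
| recol: "M \<in> pw_closure \<tau> \<tau>p P \<Longrightarrow> Pi \<in> \<tau>p - \<tau> \<Longrightarrow> Pj \<in> \<tau>p - \<tau> \<Longrightarrow> ar Pi = 1 \<Longrightarrow> ar Pj = 1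
           \<Longrightarrow> recolor Pi Pj M \<in> pw_closure \<tau> \<tau>p P"
| modif: "M \<in> pw_closure \<tau> \<tau>p P \<Longrightarrow> R \<in> \<tau>p \<Longrightarrow> qf_ok \<tau>p (ar R) B
           \<Longrightarrow> modify R B M \<in> pw_closure \<tau> \<tau>p P"

definition PW_class :: "nat \<Rightarrow> nat \<Rightarrow> sym set \<Rightarrow> struc set \<Rightarrow> bool" where
  "PW_class m k \<tau> K \<longleftrightarrow> (\<exists>\<tau>p P. vocab \<tau>p \<and> \<tau> \<subseteq> \<tau>p \<and> card (\<tau>p - \<tau>) = k
      \<and> (\<forall>R\<in>\<tau>p - \<tau>. ar R \<le> m)
      \<and> finite P \<and> (\<forall>M\<in>P. is_struc \<tau>p M)
      \<and> K = reduct \<tau> ` pw_closure \<tau> \<tau>p P)"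

section \<open>Addition operations on k-const structures\<close>

type_synonym kstruc = "struc \<times> nat list"

definition is_kstruc :: "sym set \<Rightarrow> nat \<Rightarrow> kstruc \<Rightarrow> bool" where
  "is_kstruc \<sigma> k Mc \<longleftrightarrow> is_struc \<sigma> (fst Mc) \<and> length (snd Mc) = k \<and> set (snd Mc) \<subseteq> univ (fst Mc)"

text \<open>Atoms of quantifier-free types \<open>q\<close> (in the vocabulary of the summands, over tuple positions).\<close>
datatype tatom = TEq nat nat | TRel sym "nat list"

fun tatom_ok :: "sym set \<Rightarrow> nat set \<Rightarrow> tatom \<Rightarrow> bool" where
  "tatom_ok \<sigma> w (TEq i j) = (i \<in> w \<and> j \<in> w)"
| "tatom_ok \<sigma> w (TRel R vs) = (R \<in> \<sigma> \<and> length vs = ar R \<and> set vs \<subseteq> w)"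

fun tatom_holds :: "struc \<Rightarrow> nat list \<Rightarrow> tatom \<Rightarrow> bool" where
  "tatom_holds M xs (TEq i j) = (xs ! i = xs ! j)"
| "tatom_holds M xs (TRel R vs) = (map (\<lambda>v. xs ! v) vs \<in> rel M R)"

definition qtype :: "sym set \<Rightarrow> struc \<Rightarrow> nat list \<Rightarrow> nat set \<Rightarrow> tatom set" where
  "qtype \<sigma> M xs w = {a. tatom_ok \<sigma> w a \<and> tatom_holds M xs a}"

text \<open>Atoms of the types \<open>p\<close>: vocabulary of \<open>k1+k2\<close> constants and two unary predicates
  (membership in the universes of the two summands), with equality.\<close>
datatype pterm = PVar nat | PConst nat
datatype patom = PEq pterm pterm | PIn1 pterm | PIn2 pterm

fun pterm_ok :: "nat \<Rightarrow> nat \<Rightarrow> pterm \<Rightarrow> bool" where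
  "pterm_ok n kc (PVar i) = (i < n)"
| "pterm_ok n kc (PConst c) = (c < kc)"

fun patom_ok :: "nat \<Rightarrow> nat \<Rightarrow> patom \<Rightarrow> bool" where
  "patom_ok n kc (PEq s t) = (pterm_ok n kc s \<and> pterm_ok n kc t)"
| "patom_ok n kc (PIn1 t) = pterm_ok n kc t"
| "patom_ok n kc (PIn2 t) = pterm_ok n kc t"

fun pterm_val :: "nat list \<Rightarrow> nat list \<Rightarrow> nat list \<Rightarrow> pterm \<Rightarrow> nat" where
  "pterm_val c1 c2 xs (PVar i) = xs ! i"
| "pterm_val c1 c2 xs (PConst c) = (if c < length c1 then c1 ! c else c2 ! (c - length c1))"

fun patom_holds :: "kstruc \<Rightarrow> kstruc \<Rightarrow> nat list \<Rightarrow> patom \<Rightarrow> bool" where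
  "patom_holds (M1, c1) (M2, c2) xs (PEq s t) = (pterm_val c1 c2 xs s = pterm_val c1 c2 xs t)"
| "patom_holds (M1, c1) (M2, c2) xs (PIn1 t) = (pterm_val c1 c2 xs t \<in> univ M1)"
| "patom_holds (M1, c1) (M2, c2) xs (PIn2 t) = (pterm_val c1 c2 xs t \<in> univ M2)"

definition ptype :: "kstruc \<Rightarrow> kstruc \<Rightarrow> nat list \<Rightarrow> patom set" where
  "ptype Mc1 Mc2 xs = {a. patom_ok (length xs) (length (snd Mc1) + length (snd Mc2)) a
                           \<and> patom_holds Mc1 Mc2 xs a}"

definition wset :: "struc \<Rightarrow> nat list \<Rightarrow> nat set" where
  "wset M xs = {i. i < length xs \<and> xs ! i \<in> univ M}"

text \<open>An addition operation \<open>s \<in> S_{\<tau>,k,k1,k2}\<close>; \<open>ff R w1 w2 p q1 q2\<close> is \<open>f_{R,w1,w2}(p,q1,q2)\<close>.\<close>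
record addop =
  ak  :: nat
  ak1 :: nat
  ak2 :: nat
  aA1 :: "nat set"
  aA2 :: "nat set"
  ag1 :: "nat \<Rightarrow> nat"
  ag2 :: "nat \<Rightarrow> nat"
  aB1 :: "(nat \<times> nat) set"
  aB2 :: "(nat \<times> nat) set"
  aB  :: "(nat \<times> nat) set"
  ff  :: "sym \<Rightarrow> nat set \<Rightarrow> nat set \<Rightarrow> patom set \<Rightarrow> tatom set \<Rightarrow> tatom set \<Rightarrow> bool"

definition addop_wf :: "addop \<Rightarrow> bool" where
  "addop_wf s \<longleftrightarrow> aA1 s \<subseteq> {..<ak1 s} \<and> aA2 s \<subseteq> {..<ak2 s}
     \<and> inj_on (ag1 s) (aA1 s) \<and> inj_on (ag2 s) (aA2 s)
     \<and> ag1 s ` aA1 s \<inter> ag2 s ` aA2 s = {}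
     \<and> ag1 s ` aA1 s \<union> ag2 s ` aA2 s = {..<ak s}
     \<and> aB1 s \<subseteq> {..<ak1 s} \<times> {..<ak1 s} \<and> aB2 s \<subseteq> {..<ak2 s} \<times> {..<ak2 s}
     \<and> aB s \<subseteq> {..<ak1 s} \<times> {..<ak2 s}"

definition applicable :: "addop \<Rightarrow> kstruc \<Rightarrow> kstruc \<Rightarrow> bool" where
  "applicable s Mc1 Mc2 \<longleftrightarrow>
     (let M1 = fst Mc1; c1 = snd Mc1; M2 = fst Mc2; c2 = snd Mc2 in
       length c1 = ak1 s \<and> length c2 = ak2 s
     \<and> univ M1 \<inter> univ M2 \<subseteq> set c1 \<inter> set c2
     \<and> (\<forall>i<ak1 s. \<forall>j<ak1 s. c1 ! i = c1 ! j \<longleftrightarrow> (i, j) \<in> aB1 s)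
     \<and> (\<forall>i<ak2 s. \<forall>j<ak2 s. c2 ! i = c2 ! j \<longleftrightarrow> (i, j) \<in> aB2 s)
     \<and> (\<forall>i<ak1 s. \<forall>j<ak2 s. c1 ! i = c2 ! j \<longleftrightarrow> (i, j) \<in> aB s))"

definition add_univ :: "addop \<Rightarrow> kstruc \<Rightarrow> kstruc \<Rightarrow> nat set" where
  "add_univ s Mc1 Mc2 =
     (univ (fst Mc1) - set (snd Mc1)) \<union> (univ (fst Mc2) - set (snd Mc2))
     \<union> (\<lambda>i. snd Mc1 ! i) ` aA1 s \<union> (\<lambda>i. snd Mc2 ! i) ` aA2 s"

definition add_sum :: "sym set \<Rightarrow> addop \<Rightarrow> kstruc \<Rightarrow> kstruc \<Rightarrow> kstruc" where
  "add_sum \<sigma> s Mc1 Mc2 =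
     (let M1 = fst Mc1; c1 = snd Mc1; M2 = fst Mc2; c2 = snd Mc2; U = add_univ s Mc1 Mc2 in
      (\<lparr>univ = U,
        rel = (\<lambda>R. if R \<in> \<sigma> then
                 {xs. length xs = ar R \<and> set xs \<subseteq> U
                    \<and> ff s R (wset M1 xs) (wset M2 xs) (ptype Mc1 Mc2 xs)
                         (qtype \<sigma> M1 xs (wset M1 xs)) (qtype \<sigma> M2 xs (wset M2 xs))}
               else {})\<rparr>,
       map (\<lambda>j. if j \<in> ag1 s ` aA1 s then c1 ! (inv_into (aA1 s) (ag1 s) j)
                 else c2 ! (inv_into (aA2 s) (ag2 s) j)) [0..<ak s]))"

definition kiso :: "(nat \<Rightarrow> nat) \<Rightarrow> kstruc \<Rightarrow> kstruc \<Rightarrow> bool" where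
  "kiso h Mc Nc \<longleftrightarrow> iso h (fst Mc) (fst Nc) \<and> snd Nc = map h (snd Mc)"

inductive_set add_closure :: "sym set \<Rightarrow> kstruc set \<Rightarrow> addop set \<Rightarrow> kstruc set"
  for \<sigma> :: "sym set" and P :: "kstruc set" and S :: "addop set" where
  base: "Mc \<in> P \<Longrightarrow> Mc \<in> add_closure \<sigma> P S"
| isom: "Mc \<in> add_closure \<sigma> P S \<Longrightarrow> kiso h Mc Nc \<Longrightarrow> Nc \<in> add_closure \<sigma> P S"
| add: "s \<in> S \<Longrightarrow> Mc1 \<in> add_closure \<sigma> P S \<Longrightarrow> Mc2 \<in> add_closure \<sigma> P S
         \<Longrightarrow> applicable s Mc1 Mc2 \<Longrightarrow> add_sum \<sigma> s Mc1 Mc2 \<in> add_closure \<sigma> P S"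

definition constructible :: "nat \<Rightarrow> nat \<Rightarrow> sym set \<Rightarrow> struc set \<Rightarrow> bool" where
  "constructible m k \<tau> K \<longleftrightarrow> (\<exists>\<tau>p P S. vocab \<tau>p \<and> \<tau> \<subseteq> \<tau>p
      \<and> (\<forall>R\<in>\<tau>p - \<tau>. ar R \<le> m)
      \<and> finite P \<and> (\<forall>Mc\<in>P. \<exists>k0\<le>k. is_kstruc \<tau>p k0 Mc)
      \<and> finite S \<and> (\<forall>s\<in>S. addop_wf s \<and> ak s \<le> k \<and> ak1 s \<le> k \<and> ak2 s \<le> k)
      \<and> K = (\<lambda>Mc. reduct \<tau> (fst Mc)) ` add_closure \<tau>p P S)"

end

theory Submission
  imports Defs "HOL-Library.FuncSet"
begin

(* Recolorings and modifications are quantifier-free reinterpretations: M is replaced by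
   reinterpret Phi M, where every relation R is redefined by a formula Phi R, and two
   reinterpretations compose by substituting formulas into formulas. Whether a
   quantifier-free formula holds of a tuple in a disjoint union M1 + M2 is determined by
   which summand each entry lies in, the equalities among the entries and the
   quantifier-free types of the subtuples in the summands -- exactly the data an addition
   operation without constants may inspect. Hence "reinterpret a disjoint union" is such
   an addition operation, and since only tuples of length at most the arities matter,
   finitely many operations suffice. The closure under these operations is stable under
   every reinterpretation that preserves the PW-closure, so recolorings and modifications
   can be pushed down to the initial structures: the finitely many members of the
   PW-closure living on the universes of the base structures. *)

lemma is_strucD:
  assumes "is_struc \<sigma> M"
  shows "finite (univ M)" and "xs \<in> rel M R \<Longrightarrow> length xs = ar R"
    and "xs \<in> rel M R \<Longrightarrow> set xs \<subseteq> univ M" and "R \<notin> \<sigma> \<Longrightarrow> rel M R = {}"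
  using assms unfolding is_struc_def by blast+

lemma is_strucI:
  "finite (univ M) \<Longrightarrow> (\<And>R xs. xs \<in> rel M R \<Longrightarrow> length xs = ar R \<and> set xs \<subseteq> univ M)
    \<Longrightarrow> (\<And>R. R \<notin> \<sigma> \<Longrightarrow> rel M R = {}) \<Longrightarrow> is_struc \<sigma> M"
  unfolding is_struc_def by blast

lemma struc_eqI: "univ (M :: struc) = univ N \<Longrightarrow> (\<And>R. rel M R = rel N R) \<Longrightarrow> M = N"
  by (intro struc.equality ext) simp_all

section \<open>Quantifier-free reinterpretations\<close>

fun qf_rename :: "nat list \<Rightarrow> qf \<Rightarrow> qf" where
  "qf_rename vs QTrue = QTrue"
| "qf_rename vs (QEq i j) = QEq (vs ! i) (vs ! j)"
| "qf_rename vs (QRel R us) = QRel R (map (\<lambda>u. vs ! u) us)"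
| "qf_rename vs (QNot \<phi>) = QNot (qf_rename vs \<phi>)"
| "qf_rename vs (QAnd \<phi> \<psi>) = QAnd (qf_rename vs \<phi>) (qf_rename vs \<psi>)"

lemma qf_ok_rename:
  "qf_ok \<sigma> (length vs) \<phi> \<Longrightarrow> \<forall>v\<in>set vs. v < n \<Longrightarrow> qf_ok \<sigma> n (qf_rename vs \<phi>)"
  by (induction \<phi>) auto

lemma qf_holds_rename:
  "qf_ok \<sigma> (length vs) \<phi> \<Longrightarrow> qf_holds M xs (qf_rename vs \<phi>) = qf_holds M (map (\<lambda>v. xs ! v) vs) \<phi>"
  by (induction \<phi>) (auto simp: comp_def cong: map_cong)

fun qf_subst :: "(sym \<Rightarrow> qf) \<Rightarrow> qf \<Rightarrow> qf" where
  "qf_subst \<Phi> QTrue = QTrue"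
| "qf_subst \<Phi> (QEq i j) = QEq i j"
| "qf_subst \<Phi> (QRel R vs) = qf_rename vs (\<Phi> R)"
| "qf_subst \<Phi> (QNot \<phi>) = QNot (qf_subst \<Phi> \<phi>)"
| "qf_subst \<Phi> (QAnd \<phi> \<psi>) = QAnd (qf_subst \<Phi> \<phi>) (qf_subst \<Phi> \<psi>)"

definition wf_interp :: "sym set \<Rightarrow> (sym \<Rightarrow> qf) \<Rightarrow> bool" where
  "wf_interp \<sigma> \<Phi> \<longleftrightarrow> (\<forall>R\<in>\<sigma>. qf_ok \<sigma> (ar R) (\<Phi> R))"

definition reinterpret :: "sym set \<Rightarrow> (sym \<Rightarrow> qf) \<Rightarrow> struc \<Rightarrow> struc" where
  "reinterpret \<sigma> \<Phi> M = \<lparr>univ = univ M, rel = (\<lambda>R. if R \<in> \<sigma>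
     then {xs. length xs = ar R \<and> set xs \<subseteq> univ M \<and> qf_holds M xs (\<Phi> R)} else {})\<rparr>"

lemma qf_ok_subst: "wf_interp \<sigma> \<Phi> \<Longrightarrow> qf_ok \<sigma> n \<phi> \<Longrightarrow> qf_ok \<sigma> n (qf_subst \<Phi> \<phi>)"
  by (induction \<phi>) (auto simp: wf_interp_def intro: qf_ok_rename)

lemma wf_interp_subst: "wf_interp \<sigma> \<Phi> \<Longrightarrow> wf_interp \<sigma> \<Psi> \<Longrightarrow> wf_interp \<sigma> (qf_subst \<Psi> \<circ> \<Phi>)"
  by (auto simp: wf_interp_def intro: qf_ok_subst)

lemma qf_holds_reinterpret:
  assumes "wf_interp \<sigma> \<Phi>"
  shows "qf_ok \<sigma> (length xs) \<phi> \<Longrightarrow> set xs \<subseteq> univ M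
    \<Longrightarrow> qf_holds (reinterpret \<sigma> \<Phi> M) xs \<phi> = qf_holds M xs (qf_subst \<Phi> \<phi>)"
proof (induction \<phi>)
  case (QRel R vs)
  then have "qf_ok \<sigma> (length vs) (\<Phi> R)" using assms by (auto simp: wf_interp_def)
  with QRel show ?case by (auto simp: reinterpret_def qf_holds_rename)
qed auto

lemma reinterpret_reinterpret:
  assumes "wf_interp \<sigma> \<Phi>" "wf_interp \<sigma> \<Psi>"
  shows "reinterpret \<sigma> \<Phi> (reinterpret \<sigma> \<Psi> M) = reinterpret \<sigma> (qf_subst \<Psi> \<circ> \<Phi>) M"
proof -
  have "qf_holds (reinterpret \<sigma> \<Psi> M) xs (\<Phi> R) = qf_holds M xs (qf_subst \<Psi> (\<Phi> R))"
    if "R \<in> \<sigma>" "length xs = ar R" "set xs \<subseteq> univ M" for R xs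
    using that assms by (simp add: qf_holds_reinterpret wf_interp_def)
  then show ?thesis
    by (auto simp: reinterpret_def split: if_split_asm intro!: ext)
qed

definition id_interp :: "sym \<Rightarrow> qf" where
  "id_interp R = QRel R [0..<ar R]"

lemma wf_interp_id: "wf_interp \<sigma> id_interp"
  by (auto simp: wf_interp_def id_interp_def)

lemma rel_reinterpret_id_interp:
  assumes "is_struc \<sigma> M" and "\<Phi> R = id_interp R"
  shows "rel (reinterpret \<sigma> \<Phi> M) R = rel M R"
proof -
  have [simp]: "map ((!) xs) [0..<ar R] = xs" if "length xs = ar R" for xs
    using map_nth[of xs] that by simp
  show ?thesis
    using assms(2) is_strucD(2,3)[OF assms(1), of _ R] is_strucD(4)[OF assms(1), of R]
    by (auto simp: reinterpret_def id_interp_def)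
qed

lemma reinterpret_id: "is_struc \<sigma> M \<Longrightarrow> reinterpret \<sigma> id_interp M = M"
  using rel_reinterpret_id_interp[of \<sigma> M id_interp] by (intro struc_eqI) (simp_all add: reinterpret_def)

lemma modify_eq_reinterpret:
  assumes "is_struc \<sigma> M" and "R \<in> \<sigma>"
  shows "modify R B M = reinterpret \<sigma> (id_interp(R := B)) M"
proof (rule struc_eqI)
  fix R'
  show "rel (modify R B M) R' = rel (reinterpret \<sigma> (id_interp(R := B)) M) R'"
    using assms rel_reinterpret_id_interp[OF assms(1), of "id_interp(R := B)" R']
    by (cases "R' = R") (simp_all add: modify_def reinterpret_def)
qed (simp_all add: modify_def reinterpret_def)

definition recolor_interp :: "sym \<Rightarrow> sym \<Rightarrow> sym \<Rightarrow> qf" where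
  "recolor_interp P Q = id_interp(P := QNot QTrue,
     Q := QNot (QAnd (QNot (QRel P [0])) (QNot (QRel Q [0]))))"

lemma recolor_eq_reinterpret:
  assumes "is_struc \<sigma> M" and "Q \<in> \<sigma>" and "ar P = 1" and "ar Q = 1"
  shows "recolor P Q M = reinterpret \<sigma> (recolor_interp P Q) M"
proof (rule struc_eqI)
  fix R
  have singleton: "[xs ! 0] = xs" if "length xs = 1" for xs :: "nat list"
    using that by (cases xs) auto
  show "rel (recolor P Q M) R = rel (reinterpret \<sigma> (recolor_interp P Q) M) R"
  proof (cases "R = P \<or> R = Q")
    case True
    then show ?thesis
      using assms(2-4) is_strucD(2,3)[OF assms(1), of _ P] is_strucD(2,3)[OF assms(1), of _ Q]
      by (auto simp: recolor_def reinterpret_def recolor_interp_def singleton) blast+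
  next
    case False
    then show ?thesis
      using rel_reinterpret_id_interp[OF assms(1), of "recolor_interp P Q" R]
      by (simp add: recolor_def recolor_interp_def)
  qed
qed (simp_all add: recolor_def reinterpret_def)

lemma wf_interp_recolor:
  "P \<in> \<sigma> \<Longrightarrow> Q \<in> \<sigma> \<Longrightarrow> ar P = 1 \<Longrightarrow> ar Q = 1 \<Longrightarrow> wf_interp \<sigma> (recolor_interp P Q)"
  by (auto simp: wf_interp_def recolor_interp_def id_interp_def)

lemma wf_interp_modify: "qf_ok \<sigma> (ar R) B \<Longrightarrow> wf_interp \<sigma> (id_interp(R := B))"
  by (auto simp: wf_interp_def id_interp_def)

lemma is_struc_reinterpret: "finite (univ M) \<Longrightarrow> is_struc \<sigma> (reinterpret \<sigma> \<Phi> M)"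
  by (rule is_strucI) (auto simp: reinterpret_def split: if_split_asm)

lemma is_struc_disj_union:
  assumes "is_struc \<sigma> M" and "is_struc \<sigma> N"
  shows "is_struc \<sigma> (disj_union M N)"
proof (rule is_strucI)
  fix R xs
  assume "xs \<in> rel (disj_union M N) R"
  then show "length xs = ar R \<and> set xs \<subseteq> univ (disj_union M N)"
    using is_strucD(2,3)[OF assms(1), of xs R] is_strucD(2,3)[OF assms(2), of xs R]
    by (auto simp: disj_union_def)
qed (use is_strucD[OF assms(1)] is_strucD[OF assms(2)] in \<open>simp_all add: disj_union_def\<close>)

lemma isoD:
  assumes "iso h M N"
  shows "inj_on h (univ M)" and "univ N = h ` univ M" and "rel N R = map h ` rel M R"
  using assms unfolding iso_def bij_betw_def by blast+

lemma is_struc_iso: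
  assumes "is_struc \<sigma> M" and "iso h M N"
  shows "is_struc \<sigma> N"
proof (rule is_strucI)
  note univ_N = isoD(2)[OF assms(2)] and rel_N = isoD(3)[OF assms(2)]
  then show "finite (univ N)" and "\<And>R. R \<notin> \<sigma> \<Longrightarrow> rel N R = {}"
    using is_strucD(1,4)[OF assms(1)] by simp_all
  fix R ys
  assume "ys \<in> rel N R"
  then obtain xs where "ys = map h xs" and "xs \<in> rel M R"
    using rel_N by blast
  then show "length ys = ar R \<and> set ys \<subseteq> univ N"
    using is_strucD(2,3)[OF assms(1), of xs R] univ_N by auto
qed

lemma is_struc_pw_closure: "M \<in> pw_closure \<tau> \<sigma> P \<Longrightarrow> \<forall>M\<in>P. is_struc \<sigma> M \<Longrightarrow> is_struc \<sigma> M"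
proof (induction rule: pw_closure.induct)
  case (isom M h N)
  then show ?case by (blast intro: is_struc_iso)
next
  case (union M N)
  then show ?case by (blast intro: is_struc_disj_union)
next
  case (recol M P Q)
  then show ?case
    by (simp add: recolor_eq_reinterpret is_struc_reinterpret is_strucD(1))
next
  case (modif M R B)
  then show ?case
    by (simp add: modify_eq_reinterpret is_struc_reinterpret is_strucD(1))
qed simp

lemma qf_holds_iso:
  assumes "iso h M N" and "is_struc \<sigma> M"
  shows "set xs \<subseteq> univ M \<Longrightarrow> qf_ok \<sigma>' (length xs) \<phi> \<Longrightarrow> qf_holds N (map h xs) \<phi> = qf_holds M xs \<phi>"
proof (induction \<phi>)
  case (QEq i j)
  have "xs ! i \<in> univ M" and "xs ! j \<in> univ M"
    using QEq by auto
  with QEq isoD(1)[OF assms(1)] show ?case by (auto simp: inj_on_eq_iff)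
next
  case (QRel R vs)
  have inj: "inj_on (map h) (lists (univ M))"
    using isoD(1)[OF assms(1)] by (auto intro: inj_on_mapI inj_on_subset)
  have "rel M R \<subseteq> lists (univ M)"
    using is_strucD(3)[OF assms(2), of _ R] by (auto simp: lists_eq_set)
  moreover have "map (\<lambda>v. xs ! v) vs \<in> lists (univ M)"
    using QRel.prems by force
  ultimately have mem_iff:
    "map h (map (\<lambda>v. xs ! v) vs) \<in> map h ` rel M R \<longleftrightarrow> map (\<lambda>v. xs ! v) vs \<in> rel M R"
    using inj_on_image_mem_iff[OF inj] by blast
  have args: "map (\<lambda>v. map h xs ! v) vs = map h (map (\<lambda>v. xs ! v) vs)"
    using QRel.prems by auto
  show ?case
    unfolding qf_holds.simps isoD(3)[OF assms(1)] args by (rule mem_iff)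
qed auto

lemma reinterpret_iso:
  assumes "iso h M N" and "is_struc \<sigma> M" and "wf_interp \<sigma> \<Phi>"
  shows "iso h (reinterpret \<sigma> \<Phi> M) (reinterpret \<sigma> \<Phi> N)"
proof -
  have lists_N: "lists (univ N) = map h ` lists (univ M)"
    by (simp add: isoD(2)[OF assms(1)] lists_image)
  have rel_N: "rel (reinterpret \<sigma> \<Phi> N) R = map h ` rel (reinterpret \<sigma> \<Phi> M) R" for R
  proof (cases "R \<in> \<sigma>")
    case True
    have "rel (reinterpret \<sigma> \<Phi> N) R = {ys \<in> lists (univ N). length ys = ar R \<and> qf_holds N ys (\<Phi> R)}"
      using True by (auto simp: reinterpret_def lists_eq_set)
    also have "\<dots> = map h ` {xs \<in> lists (univ M). length (map h xs) = ar R \<and> qf_holds N (map h xs) (\<Phi> R)}"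
      unfolding lists_N by blast
    also have "\<dots> = map h ` {xs \<in> lists (univ M). length xs = ar R \<and> qf_holds M xs (\<Phi> R)}"
      using True assms(3) qf_holds_iso[OF assms(1,2)]
      by (intro arg_cong[where f = "image (map h)"] Collect_cong) (auto simp: wf_interp_def lists_eq_set)
    also have "\<dots> = map h ` rel (reinterpret \<sigma> \<Phi> M) R"
      using True by (auto simp: reinterpret_def lists_eq_set)
    finally show ?thesis .
  qed (simp add: reinterpret_def)
  show ?thesis
    using assms(1) rel_N unfolding iso_def by (simp add: reinterpret_def)
qed

section \<open>Reinterpreted disjoint unions as addition operations\<close>

fun holds_by_types :: "nat set \<Rightarrow> nat set \<Rightarrow> patom set \<Rightarrow> tatom set \<Rightarrow> tatom set \<Rightarrow> qf \<Rightarrow> bool" where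
  "holds_by_types w1 w2 p q1 q2 QTrue = True"
| "holds_by_types w1 w2 p q1 q2 (QEq i j) = (PEq (PVar i) (PVar j) \<in> p)"
| "holds_by_types w1 w2 p q1 q2 (QRel R vs) =
     (set vs \<subseteq> w1 \<and> TRel R vs \<in> q1 \<or> set vs \<subseteq> w2 \<and> TRel R vs \<in> q2)"
| "holds_by_types w1 w2 p q1 q2 (QNot \<phi>) = (\<not> holds_by_types w1 w2 p q1 q2 \<phi>)"
| "holds_by_types w1 w2 p q1 q2 (QAnd \<phi> \<psi>) =
     (holds_by_types w1 w2 p q1 q2 \<phi> \<and> holds_by_types w1 w2 p q1 q2 \<psi>)"

lemma holds_by_types_disj_union:
  assumes "is_struc \<sigma> M1" and "is_struc \<sigma> M2"
  shows "qf_ok \<sigma> (length xs) \<phi> \<Longrightarrow>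
    holds_by_types (wset M1 xs) (wset M2 xs) (ptype (M1, []) (M2, []) xs)
      (qtype \<sigma> M1 xs (wset M1 xs)) (qtype \<sigma> M2 xs (wset M2 xs)) \<phi>
    = qf_holds (disj_union M1 M2) xs \<phi>"
proof (induction \<phi>)
  case (QRel R vs)
  have "map (\<lambda>v. xs ! v) vs \<in> rel M R \<longleftrightarrow> set vs \<subseteq> wset M xs \<and> TRel R vs \<in> qtype \<sigma> M xs (wset M xs)"
    if "is_struc \<sigma> M" for M
    using QRel is_strucD(3)[OF that, of "map (\<lambda>v. xs ! v) vs" R]
    by (auto simp: qtype_def wset_def)
  then show ?case
    using assms by (simp add: disj_union_def)
qed (auto simp: ptype_def)

type_synonym type_key = "sym \<times> nat set \<times> nat set \<times> patom set \<times> tatom set \<times> tatom set"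

text \<open>A sum table is only ever consulted at tuples of length \<open>ar R\<close>; restricting it to this
  finite domain is what makes finitely many addition operations suffice.\<close>

definition type_domain :: "sym set \<Rightarrow> type_key set" where
  "type_domain \<sigma> = (SIGMA R:\<sigma>. Pow {..<ar R} \<times> Pow {..<ar R} \<times> Pow {a. patom_ok (ar R) 0 a}
     \<times> Pow {a. tatom_ok \<sigma> {..<ar R} a} \<times> Pow {a. tatom_ok \<sigma> {..<ar R} a})"

lemma finite_patoms: "finite {a. patom_ok n k a}"
proof -
  let ?T = "PVar ` {..<n} \<union> PConst ` {..<k}"
  have terms: "pterm_ok n k t \<Longrightarrow> t \<in> ?T" for t
    by (cases t) auto
  have "{a. patom_ok n k a} \<subseteq> case_prod PEq ` (?T \<times> ?T) \<union> PIn1 ` ?T \<union> PIn2 ` ?T"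
  proof
    fix a
    assume "a \<in> {a. patom_ok n k a}"
    with terms show "a \<in> case_prod PEq ` (?T \<times> ?T) \<union> PIn1 ` ?T \<union> PIn2 ` ?T"
      by (cases a) (auto intro: image_eqI[where f = "case_prod PEq", OF _ SigmaI])
  qed
  then show ?thesis
    by (rule finite_subset) auto
qed

lemma finite_tatoms:
  assumes "finite \<sigma>" and "finite w"
  shows "finite {a. tatom_ok \<sigma> w a}"
proof -
  have "{a. tatom_ok \<sigma> w a} \<subseteq> case_prod TEq ` (w \<times> w)
      \<union> case_prod TRel ` (SIGMA R:\<sigma>. {vs. set vs \<subseteq> w \<and> length vs = ar R})"
    by (auto elim!: tatom_ok.elims)
  then show ?thesis
    using assms by (rule_tac finite_subset) (auto intro: finite_lists_length_eq)
qed

lemma finite_type_domain: "finite \<sigma> \<Longrightarrow> finite (type_domain \<sigma>)"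
  by (auto simp: type_domain_def finite_patoms finite_tatoms)

lemma types_in_type_domain:
  assumes "R \<in> \<sigma>" and "length xs = ar R"
  shows "(R, wset M1 xs, wset M2 xs, ptype (M1, []) (M2, []) xs,
          qtype \<sigma> M1 xs (wset M1 xs), qtype \<sigma> M2 xs (wset M2 xs)) \<in> type_domain \<sigma>"
proof -
  have "wset M xs \<subseteq> {..<ar R}" for M
    using assms(2) by (auto simp: wset_def)
  moreover have "tatom_ok \<sigma> {..<ar R} a" if "tatom_ok \<sigma> (wset M xs) a" for M a
    using that \<open>wset M xs \<subseteq> {..<ar R}\<close> by (cases a) auto
  ultimately show ?thesis
    using assms by (auto simp: type_domain_def ptype_def qtype_def)
qed

definition sum_table :: "sym set \<Rightarrow> (sym \<Rightarrow> qf) \<Rightarrow> type_key set" where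
  "sum_table \<sigma> \<Phi> = {(R, w1, w2, p, q1, q2) \<in> type_domain \<sigma>. holds_by_types w1 w2 p q1 q2 (\<Phi> R)}"

definition union_addop :: "type_key set \<Rightarrow> addop" where
  "union_addop T = \<lparr>ak = 0, ak1 = 0, ak2 = 0, aA1 = {}, aA2 = {}, ag1 = (\<lambda>_. 0), ag2 = (\<lambda>_. 0),
     aB1 = {}, aB2 = {}, aB = {}, ff = (\<lambda>R w1 w2 p q1 q2. (R, w1, w2, p, q1, q2) \<in> T)\<rparr>"

lemma applicable_union_addop:
  "applicable (union_addop T) (M1, []) (M2, []) \<longleftrightarrow> univ M1 \<inter> univ M2 = {}"
  by (simp add: applicable_def union_addop_def)

lemma add_sum_union_addop:
  assumes "is_struc \<sigma> M1" and "is_struc \<sigma> M2" and "wf_interp \<sigma> \<Phi>"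
  shows "add_sum \<sigma> (union_addop (sum_table \<sigma> \<Phi>)) (M1, []) (M2, []) = (reinterpret \<sigma> \<Phi> (disj_union M1 M2), [])"
proof -
  have table: "(R, wset M1 xs, wset M2 xs, ptype (M1, []) (M2, []) xs,
          qtype \<sigma> M1 xs (wset M1 xs), qtype \<sigma> M2 xs (wset M2 xs)) \<in> sum_table \<sigma> \<Phi>
        \<longleftrightarrow> qf_holds (disj_union M1 M2) xs (\<Phi> R)"
    if "R \<in> \<sigma>" and "length xs = ar R" for R xs
    using that types_in_type_domain[OF that] holds_by_types_disj_union[OF assms(1,2)] assms(3)
    by (simp add: sum_table_def wf_interp_def)
  have "fst (add_sum \<sigma> (union_addop (sum_table \<sigma> \<Phi>)) (M1, []) (M2, [])) = reinterpret \<sigma> \<Phi> (disj_union M1 M2)"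
  proof (rule struc_eqI)
    fix R
    show "rel (fst (add_sum \<sigma> (union_addop (sum_table \<sigma> \<Phi>)) (M1, []) (M2, []))) R
        = rel (reinterpret \<sigma> \<Phi> (disj_union M1 M2)) R"
      using table[of R]
      by (simp add: add_sum_def Let_def add_univ_def union_addop_def reinterpret_def disj_union_def cong: conj_cong)
  qed (simp add: add_sum_def Let_def add_univ_def union_addop_def reinterpret_def disj_union_def)
  moreover have "snd (add_sum \<sigma> (union_addop (sum_table \<sigma> \<Phi>)) (M1, []) (M2, [])) = []"
    by (simp add: add_sum_def Let_def union_addop_def)
  ultimately show ?thesis
    by (metis prod.collapse)
qed

lemma finite_strucs_on:
  assumes "finite \<sigma>" and "finite u"
  shows "finite {M. is_struc \<sigma> M \<and> univ M = u}" (is "finite ?S")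
proof -
  let ?tuples = "\<lambda>R. Pow {xs. set xs \<subseteq> u \<and> length xs = ar R}"
  have "inj_on (\<lambda>M. restrict (rel M) \<sigma>) ?S"
  proof (rule inj_onI)
    fix M N
    assume "M \<in> ?S" and "N \<in> ?S" and eq: "restrict (rel M) \<sigma> = restrict (rel N) \<sigma>"
    have "rel M R = rel N R" for R
      using fun_cong[OF eq, of R] is_strucD(4)[of \<sigma> M R] is_strucD(4)[of \<sigma> N R] \<open>M \<in> ?S\<close> \<open>N \<in> ?S\<close>
      by (cases "R \<in> \<sigma>") simp_all
    with \<open>M \<in> ?S\<close> \<open>N \<in> ?S\<close> show "M = N"
      by (intro struc_eqI) auto
  qed
  moreover have "restrict (rel M) \<sigma> \<in> Pi\<^sub>E \<sigma> ?tuples" if "M \<in> ?S" for M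
  proof -
    have "rel M R \<in> ?tuples R" for R
      using that is_strucD(2,3)[of \<sigma> M _ R] by auto
    then show ?thesis
      by simp
  qed
  moreover have "finite (Pi\<^sub>E \<sigma> ?tuples)"
    using assms by (intro finite_PiE) (auto intro: finite_lists_length_eq)
  ultimately show ?thesis
    by (meson image_subsetI finite_subset inj_on_finite)
qed

section \<open>Simulating a PW-presentation by additions\<close>

definition closed_interps :: "sym set \<Rightarrow> struc set \<Rightarrow> (sym \<Rightarrow> qf) set" where
  "closed_interps \<sigma> C = {\<Phi>. wf_interp \<sigma> \<Phi> \<and> (\<forall>M\<in>C. reinterpret \<sigma> \<Phi> M \<in> C)}"

lemma id_closed_interps: "(\<And>M. M \<in> C \<Longrightarrow> is_struc \<sigma> M) \<Longrightarrow> id_interp \<in> closed_interps \<sigma> C"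
  by (simp add: closed_interps_def wf_interp_id reinterpret_id)

lemma subst_closed_interps:
  assumes "\<Phi> \<in> closed_interps \<sigma> C" and "\<Psi> \<in> closed_interps \<sigma> C"
  shows "qf_subst \<Psi> \<circ> \<Phi> \<in> closed_interps \<sigma> C"
  using assms by (simp add: closed_interps_def wf_interp_subst reinterpret_reinterpret[symmetric])

locale pw_presentation =
  fixes \<tau> \<tau>p :: "sym set" and P :: "struc set"
  assumes finite_vocab: "finite \<tau>p" and finite_base: "finite P" and base_strucs: "\<forall>M\<in>P. is_struc \<tau>p M"
begin

abbreviation pw :: "struc set" where
  "pw \<equiv> pw_closure \<tau> \<tau>p P"

lemma pw_struc: "M \<in> pw \<Longrightarrow> is_struc \<tau>p M"
  using is_struc_pw_closure base_strucs by blast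

lemma recolor_closed_interps:
  "Q \<in> \<tau>p - \<tau> \<Longrightarrow> R \<in> \<tau>p - \<tau> \<Longrightarrow> ar Q = 1 \<Longrightarrow> ar R = 1
    \<Longrightarrow> recolor_interp Q R \<in> closed_interps \<tau>p pw"
  by (auto simp: closed_interps_def wf_interp_recolor recolor_eq_reinterpret[OF pw_struc, symmetric]
      intro: pw_closure.recol)

lemma modify_closed_interps:
  "R \<in> \<tau>p \<Longrightarrow> qf_ok \<tau>p (ar R) B \<Longrightarrow> id_interp(R := B) \<in> closed_interps \<tau>p pw"
  by (auto simp: closed_interps_def wf_interp_modify modify_eq_reinterpret[OF pw_struc, symmetric]
      intro: pw_closure.modif)

text \<open>The seeds are finitely many, yet they contain every reinterpretation of a base structure.\<close>

definition seeds :: "kstruc set" where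
  "seeds = (\<lambda>M. (M, [])) ` {M \<in> pw. univ M \<in> univ ` P}"

definition sum_ops :: "addop set" where
  "sum_ops = union_addop ` sum_table \<tau>p ` closed_interps \<tau>p pw"

abbreviation sums :: "kstruc set" where
  "sums \<equiv> add_closure \<tau>p seeds sum_ops"

lemma finite_seeds: "finite seeds"
proof -
  have "{M \<in> pw. univ M \<in> univ ` P} \<subseteq> (\<Union>M0\<in>P. {M. is_struc \<tau>p M \<and> univ M = univ M0})"
    using pw_struc by auto
  moreover have "finite (\<Union>M0\<in>P. {M. is_struc \<tau>p M \<and> univ M = univ M0})"
    using finite_base base_strucs finite_vocab by (auto intro: finite_strucs_on is_strucD(1))
  ultimately show ?thesis
    unfolding seeds_def by (meson finite_subset finite_imageI)
qed

lemma seeds_kstruc: "Mc \<in> seeds \<Longrightarrow> is_kstruc \<tau>p 0 Mc"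
  by (auto simp: seeds_def is_kstruc_def pw_struc)

lemma finite_sum_ops: "finite sum_ops"
proof -
  have "sum_ops \<subseteq> union_addop ` Pow (type_domain \<tau>p)"
    by (auto simp: sum_ops_def sum_table_def)
  then show ?thesis
    using finite_type_domain[OF finite_vocab] by (meson finite_surj finite_Pow_iff)
qed

lemma sum_ops_const_free: "s \<in> sum_ops \<Longrightarrow> addop_wf s \<and> ak s = 0 \<and> ak1 s = 0 \<and> ak2 s = 0"
  by (auto simp: sum_ops_def union_addop_def addop_wf_def)

lemma sums_subset_pw: "Mc \<in> sums \<Longrightarrow> Mc \<in> (\<lambda>M. (M, [])) ` pw"
proof (induction rule: add_closure.induct)
  case (base Mc)
  then show ?case by (auto simp: seeds_def)
next
  case (isom Mc h Nc)
  then obtain M where "M \<in> pw" and "Mc = (M, [])"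
    by blast
  with isom.hyps(2) have "fst Nc \<in> pw" and "Nc = (fst Nc, [])"
    by (auto simp: kiso_def intro: pw_closure.isom prod_eqI)
  then show ?case
    by (metis image_eqI)
next
  case (add s Mc1 Mc2)
  then obtain M1 M2 \<Phi> where "Mc1 = (M1, [])" "Mc2 = (M2, [])" and M: "M1 \<in> pw" "M2 \<in> pw"
    and \<Phi>: "\<Phi> \<in> closed_interps \<tau>p pw" and s: "s = union_addop (sum_table \<tau>p \<Phi>)"
    by (auto simp: sum_ops_def)
  moreover have "disj_union M1 M2 \<in> pw"
    using add.hyps(4) M by (auto simp: \<open>Mc1 = (M1, [])\<close> \<open>Mc2 = (M2, [])\<close> s applicable_union_addop intro: pw_closure.union)
  ultimately show ?case
    using \<Phi> by (simp add: add_sum_union_addop pw_struc closed_interps_def)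
qed

lemma sums_reinterpret:
  assumes "Mc \<in> sums" and "\<Phi> \<in> closed_interps \<tau>p pw"
  shows "(reinterpret \<tau>p \<Phi> (fst Mc), []) \<in> sums"
  using assms
proof (induction arbitrary: \<Phi> rule: add_closure.induct)
  case (base Mc)
  then obtain M where "Mc = (M, [])" and "M \<in> pw" and "univ M \<in> univ ` P"
    by (auto simp: seeds_def)
  moreover have "univ (reinterpret \<tau>p \<Phi> M) = univ M"
    by (simp add: reinterpret_def)
  ultimately have "(reinterpret \<tau>p \<Phi> (fst Mc), []) \<in> seeds"
    using base.prems unfolding seeds_def closed_interps_def by auto
  then show ?case
    by (rule add_closure.base)
next
  case (isom Mc h Nc)
  have "fst Mc \<in> pw"
    using sums_subset_pw[OF isom.hyps(1)] by auto
  then have "kiso h (reinterpret \<tau>p \<Phi> (fst Mc), []) (reinterpret \<tau>p \<Phi> (fst Nc), [])"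
    using isom.hyps(2) isom.prems reinterpret_iso pw_struc by (auto simp: kiso_def closed_interps_def)
  with isom.IH[OF isom.prems] show ?case
    by (rule add_closure.isom)
next
  case (add s Mc1 Mc2)
  obtain M1 M2 where Mc: "Mc1 = (M1, [])" "Mc2 = (M2, [])" and M: "M1 \<in> pw" "M2 \<in> pw"
    using sums_subset_pw[OF add.hyps(2)] sums_subset_pw[OF add.hyps(3)] by blast
  obtain \<Psi> where \<Psi>: "\<Psi> \<in> closed_interps \<tau>p pw" and s: "s = union_addop (sum_table \<tau>p \<Psi>)"
    using add.hyps(1) by (auto simp: sum_ops_def)
  let ?\<Theta> = "qf_subst \<Psi> \<circ> \<Phi>"
  have \<Theta>: "?\<Theta> \<in> closed_interps \<tau>p pw"
    using add.prems \<Psi> by (rule subst_closed_interps)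
  have "add_sum \<tau>p (union_addop (sum_table \<tau>p ?\<Theta>)) Mc1 Mc2 \<in> sums"
    using add.hyps(2-4) \<Theta> by (intro add_closure.add) (auto simp: sum_ops_def Mc s applicable_union_addop)
  moreover have "add_sum \<tau>p (union_addop (sum_table \<tau>p ?\<Theta>)) Mc1 Mc2 = (reinterpret \<tau>p \<Phi> (fst (add_sum \<tau>p s Mc1 Mc2)), [])"
    using \<Psi> \<Theta> add.prems
    by (simp add: Mc s add_sum_union_addop pw_struc[OF M(1)] pw_struc[OF M(2)] closed_interps_def reinterpret_reinterpret)
  ultimately show ?case
    by simp
qed

lemma pw_in_sums: "M \<in> pw \<Longrightarrow> (M, []) \<in> sums"
proof (induction rule: pw_closure.induct)
  case (base M)
  then have "(M, []) \<in> seeds"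
    by (auto simp: seeds_def intro: pw_closure.base)
  then show ?case
    by (rule add_closure.base)
next
  case (isom M h N)
  then have "kiso h (M, []) (N, [])"
    by (simp add: kiso_def)
  with isom.IH show ?case
    by (rule add_closure.isom)
next
  case (union M N)
  have "id_interp \<in> closed_interps \<tau>p pw"
    using pw_struc by (rule id_closed_interps)
  then have "add_sum \<tau>p (union_addop (sum_table \<tau>p id_interp)) (M, []) (N, []) \<in> sums"
    using union by (intro add_closure.add) (auto simp: sum_ops_def applicable_union_addop)
  moreover have "add_sum \<tau>p (union_addop (sum_table \<tau>p id_interp)) (M, []) (N, []) = (disj_union M N, [])"
    using union.hyps pw_struc
    by (simp add: add_sum_union_addop wf_interp_id reinterpret_id is_struc_disj_union)
  ultimately show ?case
    by simp
next
  case (recol M Q R)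
  have "recolor Q R M = reinterpret \<tau>p (recolor_interp Q R) M"
    using recol.hyps by (intro recolor_eq_reinterpret pw_struc) auto
  then show ?case
    using sums_reinterpret[OF recol.IH recolor_closed_interps[OF recol.hyps(2-5)]] by simp
next
  case (modif M R B)
  have "modify R B M = reinterpret \<tau>p (id_interp(R := B)) M"
    using modif.hyps by (intro modify_eq_reinterpret pw_struc)
  then show ?case
    using sums_reinterpret[OF modif.IH modify_closed_interps[OF modif.hyps(2,3)]] by simp
qed

lemma sums_eq_pw: "sums = (\<lambda>M. (M, [])) ` pw"
  using sums_subset_pw pw_in_sums by blast

end

theorem mainTheorem4:
  fixes \<tau> :: "sym set" and m k :: nat and K :: "struc set"
  assumes "nice \<tau>"
    and "PW_class m k \<tau> K"
  shows "constructible m 0 \<tau> K"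
proof -
  obtain \<tau>p P where "vocab \<tau>p" and "\<tau> \<subseteq> \<tau>p" and "\<forall>R\<in>\<tau>p - \<tau>. ar R \<le> m"
    and "finite P" and "\<forall>M\<in>P. is_struc \<tau>p M" and K: "K = reduct \<tau> ` pw_closure \<tau> \<tau>p P"
    using assms(2) unfolding PW_class_def by blast
  then interpret pw_presentation \<tau> \<tau>p P
    by unfold_locales (simp_all add: vocab_def)
  have "K = (\<lambda>Mc. reduct \<tau> (fst Mc)) ` add_closure \<tau>p seeds sum_ops"
    by (simp add: K sums_eq_pw image_image)
  moreover have "\<forall>Mc\<in>seeds. \<exists>k0\<le>0. is_kstruc \<tau>p k0 Mc"
    using seeds_kstruc by blast
  moreover have "\<forall>s\<in>sum_ops. addop_wf s \<and> ak s \<le> 0 \<and> ak1 s \<le> 0 \<and> ak2 s \<le> 0"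
    using sum_ops_const_free by simp
  ultimately show ?thesis
    unfolding constructible_def
    using \<open>vocab \<tau>p\<close> \<open>\<tau> \<subseteq> \<tau>p\<close> \<open>\<forall>R\<in>\<tau>p - \<tau>. ar R \<le> m\<close> finite_seeds finite_sum_ops
    by blast
qed

end
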